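(* If $G$ is a graph and $m$ is a minimal $k$-precentral function for $G$, then $m^*(y)-m^*(z) \leq 1$ for all $y,z \in V(G)$.
   Context: Let $k\ge 2$ be an integer and $G$ a graph with $|E(G)|\equiv 0 \pmod{k}$. A $k$-precentral function for $G$ is a function $p: V(G)\to\mathbb{Z}_{\geq 0}$ with $\sum_{x\in V(G)} p(x)=\frac{1}{k}|E(G)|$. For such $p$, define $p^*(x)=p(x)-\frac{1}{2k}\deg_G(x)$ for each $x\in V(G)$. The function $p$ is proportional if $p(x)\in\{\lfloor \frac{1}{2k}\deg_G(x)\rfloor, \lceil \frac{1}{2k}\deg_G(x)\rceil\}$ for every $x\in V(G)$. A proportional $k$-precentral function $p$ is minimal if it minimises $\sum_{x\in V(G)}|p^*(x)|$ among all proportional $k$-precentral functions for $G$. *)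

theory Defs
  imports Main "HOL-Library.Multiset" Complex_Main
begin

definition graph :: "'a set \<Rightarrow> 'a set set \<Rightarrow> bool" where
  "graph V E \<longleftrightarrow> finite V \<and> (\<forall>e\<in>E. e \<subseteq> V \<and> card e = 2)"

definition deg :: "'a set set \<Rightarrow> 'a \<Rightarrow> nat" where
  "deg E x = card {e \<in> E. x \<in> e}"

definition precentral :: "nat \<Rightarrow> 'a set \<Rightarrow> 'a set set \<Rightarrow> ('a \<Rightarrow> nat) \<Rightarrow> bool" where
  "precentral k V E p \<longleftrightarrow> real (\<Sum>x\<in>V. p x) = real (card E) / real k"

definition pstar :: "nat \<Rightarrow> 'a set set \<Rightarrow> ('a \<Rightarrow> nat) \<Rightarrow> 'a \<Rightarrow> real" where
  "pstar k E p x = real (p x) - real (deg E x) / (2 * real k)"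

definition proportional :: "nat \<Rightarrow> 'a set \<Rightarrow> 'a set set \<Rightarrow> ('a \<Rightarrow> nat) \<Rightarrow> bool" where
  "proportional k V E p \<longleftrightarrow> precentral k V E p \<and>
     (\<forall>x\<in>V. int (p x) = \<lfloor>real (deg E x) / (2 * real k)\<rfloor> \<or>
             int (p x) = \<lceil>real (deg E x) / (2 * real k)\<rceil>)"

definition minimal_precentral :: "nat \<Rightarrow> 'a set \<Rightarrow> 'a set set \<Rightarrow> ('a \<Rightarrow> nat) \<Rightarrow> bool" where
  "minimal_precentral k V E p \<longleftrightarrow> proportional k V E p \<and>
     (\<forall>q. proportional k V E q \<longrightarrow>
        (\<Sum>x\<in>V. \<bar>pstar k E p x\<bar>) \<le> (\<Sum>x\<in>V. \<bar>pstar k E q x\<bar>))"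

end

theory Submission
  imports Defs
begin

text \<open>Proportionality says exactly that every value of \<open>p\<^sup>*\<close> lies strictly between -1 and 1.
  If \<open>m\<^sup>*(y) - m\<^sup>*(z) > 1\<close>, then \<open>m\<^sup>*(y) > 0 > m\<^sup>*(z)\<close>, and moving one unit of \<open>m\<close> from \<open>y\<close>
  to \<open>z\<close> keeps the function proportional and precentral while strictly decreasing
  \<open>|m\<^sup>*(y)| + |m\<^sup>*(z)|\<close>, contradicting minimality.\<close>

lemma floor_or_ceiling_iff_abs_diff_less_one:
  fixes n :: int and d :: real
  shows "(n = \<lfloor>d\<rfloor> \<or> n = \<lceil>d\<rceil>) \<longleftrightarrow> \<bar>real_of_int n - d\<bar> < 1"
proof
  assume "n = \<lfloor>d\<rfloor> \<or> n = \<lceil>d\<rceil>"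
  then show "\<bar>real_of_int n - d\<bar> < 1" by linarith
next
  assume close: "\<bar>real_of_int n - d\<bar> < 1"
  show "n = \<lfloor>d\<rfloor> \<or> n = \<lceil>d\<rceil>"
  proof (cases "real_of_int n \<le> d")
    case True
    then have "n = \<lfloor>d\<rfloor>" using close by (subst eq_commute, subst floor_eq_iff) auto
    then show ?thesis ..
  next
    case False
    then have "n = \<lceil>d\<rceil>" using close by (subst eq_commute, subst ceiling_eq_iff) auto
    then show ?thesis ..
  qed
qed

lemma proportional_iff_abs_pstar_less_one:
  "proportional k V E p \<longleftrightarrow> precentral k V E p \<and> (\<forall>x\<in>V. \<bar>pstar k E p x\<bar> < 1)"
  using floor_or_ceiling_iff_abs_diff_less_one[of "int (p _)"]
  unfolding proportional_def pstar_def by simp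

lemma sum_split_pair:
  fixes f :: "'a \<Rightarrow> 'b::comm_monoid_add"
  assumes "finite V" "y \<in> V" "z \<in> V" "y \<noteq> z"
  shows "sum f V = f y + f z + sum f (V - {y, z})"
  using sum.subset_diff[of "{y, z}" V f] assms by (simp add: add.commute)

definition transfer_unit :: "('a \<Rightarrow> nat) \<Rightarrow> 'a \<Rightarrow> 'a \<Rightarrow> 'a \<Rightarrow> nat" where
  "transfer_unit p y z = p(y := p y - 1, z := p z + 1)"

lemma pstar_transfer_unit:
  assumes "y \<noteq> z" "p y \<ge> 1"
  shows "pstar k E (transfer_unit p y z) y = pstar k E p y - 1"
    and "pstar k E (transfer_unit p y z) z = pstar k E p z + 1"
    and "x \<notin> {y, z} \<Longrightarrow> pstar k E (transfer_unit p y z) x = pstar k E p x"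
  using assms by (auto simp: transfer_unit_def pstar_def of_nat_diff)

lemma sum_transfer_unit:
  assumes "finite V" "y \<in> V" "z \<in> V" "y \<noteq> z" "p y \<ge> 1"
  shows "sum (transfer_unit p y z) V = sum p V"
proof -
  have "sum (transfer_unit p y z) (V - {y, z}) = sum p (V - {y, z})"
    by (rule sum.cong) (auto simp: transfer_unit_def)
  then show ?thesis
    using assms by (simp add: sum_split_pair[OF assms(1-4)] transfer_unit_def)
qed

lemma ge_one_if_pstar_pos:
  assumes "pstar k E p y > 0"
  shows "p y \<ge> 1"
proof -
  have "real (deg E y) / (2 * real k) \<ge> 0" by simp
  then show ?thesis using assms unfolding pstar_def by linarith
qed

lemma proportional_transfer_unit:
  assumes p_prop: "proportional k V E p" and "finite V" "y \<in> V" "z \<in> V" "y \<noteq> z"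
    and pos: "pstar k E p y > 0" and neg: "pstar k E p z < 0"
  shows "proportional k V E (transfer_unit p y z)"
proof -
  have "p y \<ge> 1" using pos by (rule ge_one_if_pstar_pos)
  note pstar_q = pstar_transfer_unit[where p = p and k = k and E = E, OF \<open>y \<noteq> z\<close> this]
  have bounded: "\<forall>x\<in>V. \<bar>pstar k E p x\<bar> < 1"
    using p_prop by (simp add: proportional_iff_abs_pstar_less_one)
  have "precentral k V E (transfer_unit p y z)"
    using p_prop sum_transfer_unit[where p = p, OF assms(2-5) \<open>p y \<ge> 1\<close>]
    by (simp add: proportional_def precentral_def flip: of_nat_sum)
  moreover have "\<bar>pstar k E (transfer_unit p y z) x\<bar> < 1" if "x \<in> V" for x
    using bounded that assms(3,4) pos neg by (cases "x \<in> {y, z}") (auto simp: pstar_q)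
  ultimately show ?thesis by (simp add: proportional_iff_abs_pstar_less_one)
qed

lemma abs_sub_one_add_abs_add_one_less:
  fixes a b :: real
  assumes "a > 0" "b < 0" "a - b > 1"
  shows "\<bar>a - 1\<bar> + \<bar>b + 1\<bar> < \<bar>a\<bar> + \<bar>b\<bar>"
  using assms by linarith

lemma deviation_transfer_unit_less:
  assumes "finite V" "y \<in> V" "z \<in> V" "y \<noteq> z"
    and pos: "pstar k E p y > 0" and neg: "pstar k E p z < 0"
    and gap: "pstar k E p y - pstar k E p z > 1"
  shows "(\<Sum>x\<in>V. \<bar>pstar k E (transfer_unit p y z) x\<bar>) < (\<Sum>x\<in>V. \<bar>pstar k E p x\<bar>)"
proof -
  have "p y \<ge> 1" using pos by (rule ge_one_if_pstar_pos)
  note pstar_q = pstar_transfer_unit[where p = p and k = k and E = E, OF \<open>y \<noteq> z\<close> this]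
  have rest: "(\<Sum>x\<in>V - {y, z}. \<bar>pstar k E (transfer_unit p y z) x\<bar>)
      = (\<Sum>x\<in>V - {y, z}. \<bar>pstar k E p x\<bar>)"
    by (rule sum.cong) (simp_all add: pstar_q)
  show ?thesis
    unfolding sum_split_pair[OF assms(1-4)] rest pstar_q
    using abs_sub_one_add_abs_add_one_less[OF pos neg gap] by simp
qed

theorem lemma14:
  fixes V :: "'a set" and E :: "'a set set" and k :: nat and m :: "'a \<Rightarrow> nat"
  assumes "graph V E" and "k \<ge> 2" and "k dvd card E"
    and "minimal_precentral k V E m"
    and "y \<in> V" and "z \<in> V"
  shows "pstar k E m y - pstar k E m z \<le> 1"
proof (rule ccontr)
  assume gap: "\<not> ?thesis"
  have fin: "finite V" using assms(1) by (simp add: graph_def)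
  have m_prop: "proportional k V E m" and least:
    "\<And>q. proportional k V E q \<Longrightarrow> (\<Sum>x\<in>V. \<bar>pstar k E m x\<bar>) \<le> (\<Sum>x\<in>V. \<bar>pstar k E q x\<bar>)"
    using assms(4) by (auto simp: minimal_precentral_def)
  have "\<bar>pstar k E m y\<bar> < 1" "\<bar>pstar k E m z\<bar> < 1"
    using m_prop assms(5,6) by (auto simp: proportional_iff_abs_pstar_less_one)
  then have pos: "pstar k E m y > 0" and neg: "pstar k E m z < 0" and "y \<noteq> z"
    using gap by auto
  have "proportional k V E (transfer_unit m y z)"
    using proportional_transfer_unit[OF m_prop fin assms(5,6) \<open>y \<noteq> z\<close> pos neg] .
  moreover have "(\<Sum>x\<in>V. \<bar>pstar k E (transfer_unit m y z) x\<bar>) < (\<Sum>x\<in>V. \<bar>pstar k E m x\<bar>)"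
    using deviation_transfer_unit_less[OF fin assms(5,6) \<open>y \<noteq> z\<close> pos neg] gap by simp
  ultimately show False using least by fastforce
qed

end
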